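(* Let $p,t\in(0,\infty)$, $q\in(1,\infty)$, $r\in(0,1)$ and $\eta\in(0,1)$. Suppose $\alpha\ge0$ is such that there exists $C>0$ with $$\Big\|\Big(\sum_{Q\in\mathcal{S}}\mathsf{P}^r_Q(|f|)^t\mathbf{1}_Q\Big)^{1/t}\Big\|_{L^p(w)}\le C[w]_{A_q}^\alpha\|f\|_{L^p(w)}$$ for all weights $w\in A_q$, all $\eta$-sparse collections of cubes $\mathcal{S}$ and all $f\in L^p(w)$. Then $\alpha\ge\max\{\frac1p,\frac1t\}$.
   Context: A family $\mathcal{S}$ of cubes in $\mathbb{R}^d$ is $\eta$-sparse if there are pairwise disjoint $E_Q\subseteq Q$, $Q\in\mathcal{S}$, with $|E_Q|\ge\eta|Q|$. $\mathsf{P}^r_Q(g):=\inf\{\lambda\in\mathbb{R}:|\{x\in Q:g(x)>\lambda\}|\le r|Q|\}$. A weight $w$ is a locally integrable positive function, $\|f\|_{L^p(w)}=(\int|f|^pw)^{1/p}$; $[w]_{A_q}:=\sup_Q\langle w\rangle_Q\langle w^{-1/(q-1)}\rangle_Q^{q-1}$ over cubes $Q$, and $w\in A_q$ means this is finite. *)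

theory Defs
  imports "HOL-Analysis.Analysis"
begin

text \<open>Real powers of extended nonnegative reals (infinity stays infinity);
  only used with positive exponents a.\<close>
definition epowr :: "ennreal \<Rightarrow> real \<Rightarrow> ennreal" where
  "epowr x a = (if x = top then top else ennreal (enn2real x powr a))"

definition cubes :: "'a::euclidean_space set set" where
  "cubes = {cbox x (x + l *\<^sub>R One) | x l. l > 0}"

definition sparse :: "real \<Rightarrow> 'a::euclidean_space set set \<Rightarrow> bool" where
  "sparse \<eta> S \<longleftrightarrow> S \<subseteq> cubes \<and>
     (\<exists>E. disjoint_family_on E S \<and>
        (\<forall>Q\<in>S. E Q \<subseteq> Q \<and> E Q \<in> sets lebesgue \<and>
                 measure lebesgue (E Q) \<ge> \<eta> * measure lebesgue Q))"

definition Pr :: "real \<Rightarrow> 'a::euclidean_space set \<Rightarrow> ('a \<Rightarrow> real) \<Rightarrow> real" where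
  "Pr r Q g = Inf {l. measure lebesgue {x\<in>Q. g x > l} \<le> r * measure lebesgue Q}"

definition weight :: "('a::euclidean_space \<Rightarrow> real) \<Rightarrow> bool" where
  "weight w \<longleftrightarrow> w \<in> borel_measurable lebesgue \<and> (\<forall>x. w x > 0) \<and>
     (\<forall>K. compact K \<longrightarrow> set_integrable lebesgue K w)"

definition avg :: "'a::euclidean_space set \<Rightarrow> ('a \<Rightarrow> real) \<Rightarrow> real" where
  "avg Q g = (\<integral>x\<in>Q. g x \<partial>lebesgue) / measure lebesgue Q"

definition Aq_quantity :: "real \<Rightarrow> ('a::euclidean_space \<Rightarrow> real) \<Rightarrow> 'a set \<Rightarrow> real" where
  "Aq_quantity q w Q = avg Q w * (avg Q (\<lambda>x. w x powr (-1 / (q - 1)))) powr (q - 1)"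

definition in_Aq :: "real \<Rightarrow> ('a::euclidean_space \<Rightarrow> real) \<Rightarrow> bool" where
  "in_Aq q w \<longleftrightarrow> weight w \<and>
     (\<forall>Q\<in>cubes. set_integrable lebesgue Q w \<and>
                 set_integrable lebesgue Q (\<lambda>x. w x powr (-1 / (q - 1)))) \<and>
     bdd_above (Aq_quantity q w ` cubes)"

definition Aq_char :: "real \<Rightarrow> ('a::euclidean_space \<Rightarrow> real) \<Rightarrow> real" where
  "Aq_char q w = (SUP Q\<in>cubes. Aq_quantity q w Q)"

definition Lpw_norm :: "real \<Rightarrow> ('a::euclidean_space \<Rightarrow> real) \<Rightarrow> ('a \<Rightarrow> ennreal) \<Rightarrow> ennreal" where
  "Lpw_norm p w F = epowr (\<integral>\<^sup>+ x. epowr (F x) p * ennreal (w x) \<partial>lebesgue) (1 / p)"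

definition in_Lpw :: "real \<Rightarrow> ('a::euclidean_space \<Rightarrow> real) \<Rightarrow> ('a \<Rightarrow> real) \<Rightarrow> bool" where
  "in_Lpw p w f \<longleftrightarrow> f \<in> borel_measurable lebesgue \<and>
     (\<integral>\<^sup>+ x. ennreal (\<bar>f x\<bar> powr p * w x) \<partial>lebesgue) < top"

definition sparse_op :: "real \<Rightarrow> real \<Rightarrow> 'a::euclidean_space set set \<Rightarrow> ('a \<Rightarrow> real) \<Rightarrow> 'a \<Rightarrow> ennreal" where
  "sparse_op r t S f x = epowr (\<integral>\<^sup>+ Q. ennreal (Pr r Q (\<lambda>y. \<bar>f y\<bar>) powr t * indicator Q x) \<partial>count_space S) (1 / t)"

end

theory Submission
  imports Defs "HOL-Real_Asymp.Real_Asymp"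
begin

text \<open>
  Test the bound with the power weights \<open>w\<^sub>n(x) = |x|\<^sub>\<infinity> powr (1/n - d)\<close> and with cubes
  centred at the origin. The \<open>A\<^sub>q\<close> characteristic of \<open>w\<^sub>n\<close> grows only linearly in \<open>n\<close>,
  the cube \<open>[-R,R]^d\<close> has \<open>w\<^sub>n\<close>-mass \<open>O(n R powr (1/n))\<close>, and for a fixed ratio \<open>b > 1\<close>
  each of the shells between \<open>[-b^-(j+1), b^-(j+1)]^d\<close> and \<open>[-b^-j, b^-j]^d\<close>, \<open>j \<le> 2n\<close>,
  has \<open>w\<^sub>n\<close>-mass bounded below independently of \<open>n\<close>.

  For \<open>\<alpha> \<ge> 1/p\<close> take \<open>S = {[-1,1]^d}\<close> and \<open>f\<close> the indicator of the outermost shell: the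
  operator is \<open>1\<close> on \<open>[-1,1]^d\<close>, so its norm is of order at least \<open>n powr (1/p)\<close>, while
  \<open>\<parallel>f\<parallel>\<close> stays bounded. For \<open>\<alpha> \<ge> 1/t\<close> take \<open>f\<close> the indicator of \<open>[-1,1]^d\<close> and \<open>S\<close>
  the \<open>2n\<close> nested cubes \<open>[-b^-k, b^-k]^d\<close>, which are sparse with the shells as disjoint
  parts: the operator is at least \<open>n powr (1/t)\<close> on the inner \<open>n\<close> shells, so its norm is of
  order at least \<open>n powr (1/t + 1/p)\<close>, while \<open>\<parallel>f\<parallel> = O(n powr (1/p))\<close>. Comparing growth
  rates in \<open>n\<close> bounds \<open>\<alpha>\<close> from below.
\<close>

section \<open>Centered cubes and their shells\<close>

definition centered_cube :: "real \<Rightarrow> 'a::euclidean_space set" where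
  "centered_cube \<rho> = cbox (- (\<rho> *\<^sub>R One)) (\<rho> *\<^sub>R One)"

lemma mem_centered_cube: "x \<in> centered_cube \<rho> \<longleftrightarrow> infnorm x \<le> \<rho>"
proof -
  have "x \<in> centered_cube \<rho> \<longleftrightarrow> (\<forall>i\<in>Basis. \<bar>x \<bullet> i\<bar> \<le> \<rho>)"
    by (auto simp: centered_cube_def mem_box abs_le_iff)
  also have "\<dots> \<longleftrightarrow> infnorm x \<le> \<rho>"
    by (simp add: infnorm_Max)
  finally show ?thesis .
qed

lemma centered_cube_mono: "\<rho> \<le> \<rho>' \<Longrightarrow> centered_cube \<rho> \<subseteq> centered_cube \<rho>'"
  by (auto simp: mem_centered_cube)

lemma centered_cube_borel [measurable]: "centered_cube \<rho> \<in> sets borel"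
  by (simp add: centered_cube_def)

lemma emeasure_centered_cube:
  "0 \<le> \<rho> \<Longrightarrow> emeasure lborel (centered_cube \<rho> :: 'a::euclidean_space set) = ennreal ((2 * \<rho>) ^ DIM('a))"
  by (simp add: centered_cube_def emeasure_lborel_cbox_eq inner_diff_left prod_constant algebra_simps)

lemma measure_centered_cube:
  "0 \<le> \<rho> \<Longrightarrow> measure lebesgue (centered_cube \<rho> :: 'a::euclidean_space set) = (2 * \<rho>) ^ DIM('a)"
  by (simp add: measure_completion measure_def emeasure_centered_cube)

lemma centered_cube_in_cubes: "0 < \<rho> \<Longrightarrow> centered_cube \<rho> \<in> cubes"
proof -
  assume "0 < \<rho>"
  have "- (\<rho> *\<^sub>R One) + (2 * \<rho>) *\<^sub>R One = \<rho> *\<^sub>R (One :: 'a)"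
    by (simp flip: scaleR_left_diff_distrib)
  then have "centered_cube \<rho> = cbox (- (\<rho> *\<^sub>R One)) (- (\<rho> *\<^sub>R One) + (2 * \<rho>) *\<^sub>R (One :: 'a))"
    by (simp only: centered_cube_def)
  moreover have "0 < 2 * \<rho>" using \<open>0 < \<rho>\<close> by simp
  ultimately show ?thesis unfolding cubes_def by blast
qed

lemma infnorm_scaleR_One: "0 \<le> c \<Longrightarrow> infnorm (c *\<^sub>R (One :: 'a::euclidean_space)) = c"
  by (simp add: infnorm_mul infnorm_Max)

lemma inj_on_centered_cube: "inj_on (centered_cube :: real \<Rightarrow> 'a::euclidean_space set) {0..}"
proof (rule inj_onI)
  fix \<rho> \<rho>' :: real
  assume "\<rho> \<in> {0..}" "\<rho>' \<in> {0..}" and eq: "(centered_cube \<rho> :: 'a set) = centered_cube \<rho>'"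
  have "\<rho> *\<^sub>R (One :: 'a) \<in> centered_cube \<rho>'"
    using \<open>\<rho> \<in> {0..}\<close> unfolding eq[symmetric] by (simp add: mem_centered_cube infnorm_scaleR_One)
  moreover have "\<rho>' *\<^sub>R (One :: 'a) \<in> centered_cube \<rho>"
    using \<open>\<rho>' \<in> {0..}\<close> unfolding eq by (simp add: mem_centered_cube infnorm_scaleR_One)
  ultimately
  show "\<rho> = \<rho>'" using \<open>\<rho> \<in> {0..}\<close> \<open>\<rho>' \<in> {0..}\<close>
    by (simp add: mem_centered_cube infnorm_scaleR_One)
qed

lemma emeasure_centered_cube_diff:
  assumes "0 \<le> \<rho>'" "\<rho>' \<le> \<rho>"
  shows "emeasure lborel (centered_cube \<rho> - centered_cube \<rho>' :: 'a::euclidean_space set)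
    = ennreal ((2 * \<rho>) ^ DIM('a) - (2 * \<rho>') ^ DIM('a))"
proof -
  have "emeasure lborel (centered_cube \<rho> - centered_cube \<rho>' :: 'a set)
      = emeasure lborel (centered_cube \<rho> :: 'a set) - emeasure lborel (centered_cube \<rho>' :: 'a set)"
    using assms centered_cube_mono[of \<rho>' \<rho>] by (intro emeasure_Diff) (auto simp: emeasure_centered_cube)
  also have "\<dots> = ennreal ((2 * \<rho>) ^ DIM('a) - (2 * \<rho>') ^ DIM('a))"
    using assms by (simp add: emeasure_centered_cube ennreal_minus power_mono)
  finally show ?thesis .
qed

lemma cubesE:
  fixes Q :: "'a::euclidean_space set"
  assumes "Q \<in> cubes"
  obtains a l where "Q = cbox a (a + l *\<^sub>R One)" "0 < l"
    "emeasure lborel Q = ennreal (l ^ DIM('a))" "\<And>z. z \<in> Q \<Longrightarrow> \<bar>infnorm z - infnorm a\<bar> \<le> l"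
proof -
  obtain a l where Q: "Q = cbox a (a + l *\<^sub>R One)" and l: "0 < l"
    using assms unfolding cubes_def by blast
  have "\<bar>infnorm z - infnorm a\<bar> \<le> l" if "z \<in> Q" for z
  proof -
    have "\<forall>i\<in>Basis. \<bar>(z - a) \<bullet> i\<bar> \<le> l"
      using that by (auto simp: Q mem_box inner_diff_left algebra_simps)
    then have "infnorm (z - a) \<le> l" by (simp add: infnorm_Max)
    then show ?thesis using absdiff_infnorm[of z a] by linarith
  qed
  with Q l show thesis
    by (intro that) (simp_all add: emeasure_lborel_cbox_eq inner_add_left prod_constant)
qed

definition cube_shell :: "real \<Rightarrow> nat \<Rightarrow> 'a::euclidean_space set" where
  "cube_shell b j = centered_cube (1 / b ^ j) - centered_cube (1 / b ^ (j + 1))"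

lemma cube_shell_borel [measurable]: "cube_shell b j \<in> sets borel"
  by (simp add: cube_shell_def)

lemma cube_shell_subset: "1 \<le> b \<Longrightarrow> m \<le> j \<Longrightarrow> cube_shell b j \<subseteq> centered_cube (1 / b ^ m)"
  unfolding cube_shell_def
  by (intro Diff_subset[THEN order_trans] centered_cube_mono) (auto intro: divide_left_mono power_increasing)

lemma disjoint_family_cube_shell: "1 \<le> b \<Longrightarrow> disjoint_family (cube_shell b)"
proof -
  assume "1 \<le> b"
  have "cube_shell b j \<inter> cube_shell b k = {}" if "j < k" for j k
    using cube_shell_subset[OF \<open>1 \<le> b\<close>, of "j + 1" k] that by (auto simp: cube_shell_def)
  then show ?thesis
    unfolding disjoint_family_on_def by (metis Int_commute linorder_neqE_nat)
qed

lemma emeasure_cube_shell: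
  assumes "1 \<le> b"
  shows "emeasure lborel (cube_shell b j :: 'a::euclidean_space set)
    = ennreal ((2 / b ^ j) ^ DIM('a) * (1 - (1 / b) ^ DIM('a)))"
proof -
  have "emeasure lborel (cube_shell b j :: 'a set)
      = ennreal ((2 * (1 / b ^ j)) ^ DIM('a) - (2 * (1 / b ^ j / b)) ^ DIM('a))"
    unfolding cube_shell_def using assms
    by (subst emeasure_centered_cube_diff) (auto simp: divide_le_eq mult.commute)
  also have "(2 * (1 / b ^ j)) ^ DIM('a) - (2 * (1 / b ^ j / b)) ^ DIM('a)
      = (2 / b ^ j) ^ DIM('a) * (1 - (1 / b) ^ DIM('a))"
  proof -
    have "2 * (1 / b ^ j / b) = 2 / b ^ j * (1 / b)" by simp
    then have "(2 * (1 / b ^ j / b)) ^ DIM('a) = (2 / b ^ j) ^ DIM('a) * (1 / b) ^ DIM('a)"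
      by (simp only: power_mult_distrib)
    then show ?thesis by (simp add: right_diff_distrib)
  qed
  finally show ?thesis .
qed

lemma measure_cube_shell:
  "1 \<le> b \<Longrightarrow> measure lebesgue (cube_shell b j :: 'a::euclidean_space set)
    = (2 / b ^ j) ^ DIM('a) * (1 - (1 / b) ^ DIM('a))"
  by (simp add: measure_completion measure_def emeasure_cube_shell power_le_one)

lemma power_DIM_inverse_le: "1 \<le> (b :: real) \<Longrightarrow> (1 / b) ^ DIM('a::euclidean_space) \<le> 1 / b"
  using power_decreasing[of 1 "DIM('a)" "1 / b"] by (simp add: DIM_positive Suc_le_eq)

section \<open>Power weights\<close>

text \<open>The value at the origin is irrelevant (a null set); it only keeps the weight positive.\<close>
definition power_weight :: "nat \<Rightarrow> 'a::euclidean_space \<Rightarrow> real" where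
  "power_weight n x = (if x = 0 then 1 else infnorm x powr (1 / real n - DIM('a)))"

lemma power_weight_pos: "0 < power_weight n x"
  by (simp add: power_weight_def infnorm_eq_0)

lemma power_weight_borel [measurable]: "power_weight n \<in> borel_measurable borel"
proof -
  have [measurable]: "infnorm \<in> borel_measurable (borel :: 'a measure)"
    by (intro borel_measurable_continuous_onI continuous_intros)
  show ?thesis unfolding power_weight_def by measurable
qed

lemma power_weight_exponent_nonpos: "1 \<le> n \<Longrightarrow> 1 / real n - DIM('a::euclidean_space) \<le> 0"
proof -
  assume "1 \<le> n"
  then have "1 / real n \<le> 1" by simp
  moreover have "1 \<le> real DIM('a)" by (simp add: DIM_positive Suc_le_eq)
  ultimately show ?thesis by linarith
qed

lemma power_weight_le:
  assumes "1 \<le> n" "0 < \<rho>" "\<rho> \<le> infnorm x"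
  shows "power_weight n (x :: 'a::euclidean_space) \<le> \<rho> powr (1 / real n - DIM('a))"
  using assms power_weight_exponent_nonpos[OF assms(1), where 'a='a]
  by (auto simp: power_weight_def infnorm_0 intro: powr_mono2')

lemma power_weight_ge:
  assumes "1 \<le> n" "x \<noteq> 0" "infnorm x \<le> \<rho>"
  shows "\<rho> powr (1 / real n - DIM('a)) \<le> power_weight n (x :: 'a::euclidean_space)"
  using assms power_weight_exponent_nonpos[OF assms(1), where 'a='a]
  by (auto simp: power_weight_def infnorm_pos_lt intro: powr_mono2')

lemma two_powr_neg_inverse_le:
  assumes "1 \<le> n"
  shows "2 powr (-1 / real n) \<le> 1 - 1 / (2 * real n)"
proof -
  define y where "y = 1 - 1 / (2 * real n)"
  have "0 < y" using assms by (simp add: y_def field_simps)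
  have "1 + real n * (- 1 / (2 * real n)) \<le> (1 + (- 1 / (2 * real n))) ^ n"
    by (rule Bernoulli_inequality) (use assms in \<open>simp add: field_simps\<close>)
  then have "1 / 2 \<le> y ^ n" using assms by (simp add: y_def field_simps)
  have "2 powr (-1 / real n) = (1 / 2) powr (1 / real n)"
    by (simp add: powr_minus_divide powr_divide)
  also have "\<dots> \<le> (y ^ n) powr (1 / real n)"
    using \<open>1 / 2 \<le> y ^ n\<close> by (intro powr_mono2) auto
  also have "\<dots> = y"
    using \<open>0 < y\<close> assms by (simp add: powr_realpow[symmetric] powr_powr)
  finally show ?thesis by (simp add: y_def)
qed

lemma suminf_two_powr_neg_inverse_le:
  assumes "1 \<le> n"
  shows "(\<Sum>j. ennreal ((2 powr (-1 / real n)) ^ (j + 1))) \<le> ennreal (2 * real n)"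
proof -
  define x where "x = 2 powr (-1 / real n)"
  have "x \<le> 1 - 1 / (2 * real n)"
    using two_powr_neg_inverse_le[OF assms] by (simp add: x_def)
  moreover have "0 < 1 / (2 * real n)" using assms by simp
  ultimately have "x < 1" "1 \<le> 2 * real n * (1 - x)"
    using assms by (linarith, simp add: field_simps)
  have "0 < x" by (simp add: x_def)
  have "(\<lambda>j. x * x ^ j) sums (x * (1 / (1 - x)))"
    using \<open>0 < x\<close> \<open>x < 1\<close> by (intro sums_mult geometric_sums) simp
  then have "(\<Sum>j. ennreal (x ^ (j + 1))) = ennreal (x / (1 - x))"
    using \<open>0 < x\<close> by (intro suminf_ennreal_eq) (simp_all add: mult.commute)
  also have "\<dots> \<le> ennreal (2 * real n)"
    using \<open>x < 1\<close> \<open>1 \<le> 2 * real n * (1 - x)\<close> by (intro ennreal_leI) (simp add: pos_divide_le_eq)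
  finally show ?thesis unfolding x_def .
qed

lemma power_weight_le_dyadic_sum:
  fixes x :: "'a::euclidean_space"
  assumes "0 < R" "1 \<le> n" "x \<noteq> 0"
  shows "ennreal (power_weight n x) * indicator (centered_cube R) x
    \<le> (\<Sum>j. ennreal ((R / 2 ^ (j + 1)) powr (1 / real n - DIM('a))) * indicator (centered_cube (R / 2 ^ j)) x)"
proof (cases "x \<in> centered_cube R")
  case True
  then have "0 < infnorm x" "infnorm x \<le> R / 2 ^ 0"
    using assms by (simp_all add: mem_centered_cube infnorm_pos_lt)
  moreover obtain k where "R / 2 ^ k < infnorm x"
    using real_arch_pow[of 2 "R / infnorm x"] \<open>0 < infnorm x\<close> by (auto simp: field_simps)
  ultimately obtain j where j: "infnorm x \<le> R / 2 ^ j" "R / 2 ^ Suc j < infnorm x"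
    using exists_least_lemma[of "\<lambda>j. R / 2 ^ j < infnorm x"] by (metis not_less)
  let ?c = "\<lambda>j. ennreal ((R / 2 ^ (j + 1)) powr (1 / real n - DIM('a)))"
  have "ennreal (power_weight n x) \<le> ?c j"
    using j assms by (intro ennreal_leI power_weight_le) auto
  also have "\<dots> = ?c j * indicator (centered_cube (R / 2 ^ j)) x"
    using j by (simp add: mem_centered_cube)
  also have "\<dots> \<le> (\<Sum>j. ?c j * indicator (centered_cube (R / 2 ^ j)) x)"
    using sum_le_suminf[OF summableI, of "{j}"] by simp
  finally show ?thesis using True by simp
qed simp

lemma power_weight_dyadic_mass:
  assumes "0 < R"
  shows "ennreal ((R / 2 ^ (j + 1)) powr (1 / real n - DIM('a)))
      * emeasure lborel (centered_cube (R / 2 ^ j) :: 'a::euclidean_space set)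
    = ennreal (4 ^ DIM('a) * R powr (1 / real n)) * ennreal ((2 powr (-1 / real n)) ^ (j + 1))"
proof -
  define a where "a = R / 2 ^ (j + 1)"
  have "0 < a" using assms by (simp add: a_def)
  have "2 * (R / 2 ^ j) = 4 * a" by (simp add: a_def field_simps)
  then have "ennreal (a powr (1 / real n - DIM('a))) * emeasure lborel (centered_cube (R / 2 ^ j) :: 'a set)
      = ennreal (a powr (1 / real n - DIM('a)) * (4 * a) ^ DIM('a))"
    using assms by (simp add: emeasure_centered_cube a_def ennreal_mult')
  also have "a powr (1 / real n - DIM('a)) * (4 * a) ^ DIM('a) = 4 ^ DIM('a) * a powr (1 / real n)"
    using \<open>0 < a\<close> by (simp add: power_mult_distrib powr_realpow[symmetric] powr_add[symmetric])
  also have "a powr (1 / real n) = R powr (1 / real n) / 2 powr (real (j + 1) / real n)"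
  proof -
    have "(2::real) ^ (j + 1) = 2 powr real (j + 1)" by (subst powr_realpow) auto
    then show ?thesis using assms by (simp add: a_def powr_divide powr_powr)
  qed
  also have "\<dots> = R powr (1 / real n) * (2 powr (-1 / real n)) ^ (j + 1)"
  proof -
    have "(2 powr (-1 / real n)) ^ (j + 1) = 2 powr (- (real (j + 1) / real n))"
      by (subst powr_power) auto
    then show ?thesis by (simp add: powr_minus_divide)
  qed
  finally show ?thesis by (simp add: a_def ennreal_mult' mult.assoc)
qed

lemma nn_integral_power_weight_centered_cube_le:
  assumes "0 < R" "1 \<le> n"
  shows "(\<integral>\<^sup>+x\<in>centered_cube R. ennreal (power_weight n x) \<partial>(lborel :: 'a::euclidean_space measure))
    \<le> ennreal (2 * real n * 4 ^ DIM('a) * R powr (1 / real n))"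
proof -
  define g where "g j = (R / 2 ^ (j + 1)) powr (1 / real n - DIM('a))" for j :: nat
  have "(\<integral>\<^sup>+x\<in>centered_cube R. ennreal (power_weight n x) \<partial>(lborel :: 'a measure))
      \<le> (\<integral>\<^sup>+x. (\<Sum>j. ennreal (g j) * indicator (centered_cube (R / 2 ^ j)) x) \<partial>(lborel :: 'a measure))"
    using power_weight_le_dyadic_sum[where 'a='a, OF assms] AE_lborel_singleton[of 0]
    by (intro nn_integral_mono_AE) (auto simp: g_def)
  also have "\<dots> = (\<Sum>j. ennreal (g j) * emeasure lborel (centered_cube (R / 2 ^ j) :: 'a set))"
    by (simp add: nn_integral_suminf nn_integral_cmult_indicator)
  also have "\<dots> = ennreal (4 ^ DIM('a) * R powr (1 / real n)) * (\<Sum>j. ennreal ((2 powr (-1 / real n)) ^ (j + 1)))"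
    unfolding g_def power_weight_dyadic_mass[OF assms(1)] by simp
  also have "\<dots> \<le> ennreal (4 ^ DIM('a) * R powr (1 / real n)) * ennreal (2 * real n)"
    by (intro mult_left_mono suminf_two_powr_neg_inverse_le assms) simp
  also have "\<dots> = ennreal (2 * real n * 4 ^ DIM('a) * R powr (1 / real n))"
    by (simp add: ennreal_mult'[symmetric] mult_ac)
  finally show ?thesis .
qed

lemma nn_integral_power_weight_ge_emeasure:
  fixes A :: "'a::euclidean_space set"
  assumes n: "1 \<le> n" and [measurable]: "A \<in> sets borel" and A: "A \<subseteq> centered_cube \<rho>" "0 \<notin> A"
  shows "ennreal (\<rho> powr (1 / real n - DIM('a))) * emeasure lborel A
    \<le> (\<integral>\<^sup>+x\<in>A. ennreal (power_weight n x) \<partial>lborel)"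
proof -
  have "ennreal (\<rho> powr (1 / real n - DIM('a))) * emeasure lborel A
      = (\<integral>\<^sup>+x. ennreal (\<rho> powr (1 / real n - DIM('a))) * indicator A x \<partial>lborel)"
    by (simp add: nn_integral_cmult_indicator)
  also have "\<dots> \<le> (\<integral>\<^sup>+x\<in>A. ennreal (power_weight n x) \<partial>lborel)"
    using A n by (intro nn_integral_mono)
      (auto intro!: ennreal_leI power_weight_ge simp: mem_centered_cube[symmetric] split: split_indicator)
  finally show ?thesis .
qed

lemma nn_integral_power_weight_cube_shell_ge:
  assumes b: "1 < b" and n: "1 \<le> n" and j: "j \<le> 2 * n"
  shows "ennreal (2 ^ DIM('a) * (1 - 1 / b) / b\<^sup>2)
    \<le> (\<integral>\<^sup>+x\<in>cube_shell b j. ennreal (power_weight n x) \<partial>(lborel :: 'a::euclidean_space measure))"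
proof -
  define e where "e = 1 / real n - DIM('a)"
  define u where "u = 1 / b ^ j"
  have "0 < u" using b by (simp add: u_def)
  have "u powr (1 / real n) = b powr (- (real j / real n))"
    using b by (simp add: u_def powr_divide powr_realpow[symmetric] powr_powr powr_minus_divide)
  also have "\<dots> \<ge> b powr (-2)"
    using b n j by (intro powr_mono) (auto simp: field_simps)
  finally have "1 / b\<^sup>2 \<le> u powr (1 / real n)"
    using b by (simp add: powr_minus_divide powr_realpow)
  moreover have "1 - 1 / b \<le> 1 - (1 / b) ^ DIM('a)"
    using power_DIM_inverse_le[of b, where 'a='a] b by simp
  ultimately have "(1 - 1 / b) / b\<^sup>2 \<le> u powr (1 / real n) * (1 - (1 / b) ^ DIM('a))"
    using mult_mono[of "1 / b\<^sup>2" "u powr (1 / real n)" "1 - 1 / b" "1 - (1 / b) ^ DIM('a)"] b by simp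
  also have "2 ^ DIM('a) * (u powr (1 / real n) * (1 - (1 / b) ^ DIM('a)))
      = u powr e * ((2 / b ^ j) ^ DIM('a) * (1 - (1 / b) ^ DIM('a)))"
  proof -
    have "u powr e * u ^ DIM('a) = u powr (1 / real n)"
      using \<open>0 < u\<close> by (simp add: e_def powr_realpow[symmetric] powr_add[symmetric])
    moreover have "2 / b ^ j = 2 * u" by (simp add: u_def)
    ultimately show ?thesis by (simp add: power_mult_distrib mult_ac)
  qed
  ultimately have "2 ^ DIM('a) * (1 - 1 / b) / b\<^sup>2 \<le> u powr e * ((2 / b ^ j) ^ DIM('a) * (1 - (1 / b) ^ DIM('a)))"
    by (metis (no_types) mult_left_mono times_divide_eq_right zero_le_numeral zero_le_power)
  then have "ennreal (2 ^ DIM('a) * (1 - 1 / b) / b\<^sup>2) \<le> ennreal (u powr e) * emeasure lborel (cube_shell b j :: 'a set)"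
    using b by (simp add: emeasure_cube_shell ennreal_mult'[symmetric] ennreal_leI)
  also have "\<dots> \<le> (\<integral>\<^sup>+x\<in>cube_shell b j. ennreal (power_weight n x) \<partial>(lborel :: 'a measure))"
    unfolding e_def using b n cube_shell_subset[of b j j]
    by (intro nn_integral_power_weight_ge_emeasure) (auto simp: u_def cube_shell_def mem_centered_cube infnorm_0)
  finally show ?thesis .
qed

lemma nn_integral_mult_power_weight_ge:
  fixes F :: "'a::euclidean_space \<Rightarrow> ennreal"
  assumes b: "1 < b" and n: "1 \<le> n"
    and F: "\<And>j x. j \<in> {n..<2 * n} \<Longrightarrow> x \<in> cube_shell b j \<Longrightarrow> \<gamma> \<le> F x"
  shows "\<gamma> * ennreal (real n * (2 ^ DIM('a) * (1 - 1 / b) / b\<^sup>2))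
    \<le> (\<integral>\<^sup>+x. F x * ennreal (power_weight n x) \<partial>lborel)"
proof -
  define c where "c = 2 ^ DIM('a) * (1 - 1 / b) / b\<^sup>2"
  have disj: "disjoint_family_on (cube_shell b) {n..<2 * n}"
    using disjoint_family_cube_shell[of b] b by (auto simp: disjoint_family_on_def)
  have "\<gamma> * ennreal (real n * c) = \<gamma> * (\<Sum>j\<in>{n..<2 * n}. ennreal c)"
    using b by (simp add: c_def ennreal_of_nat_eq_real_of_nat ennreal_mult'[symmetric])
  also have "\<dots> \<le> \<gamma> * (\<Sum>j\<in>{n..<2 * n}. \<integral>\<^sup>+x\<in>cube_shell b j. ennreal (power_weight n x) \<partial>(lborel :: 'a measure))"
  proof (intro mult_left_mono sum_mono)
    fix j assume "j \<in> {n..<2 * n}"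
    then show "ennreal c \<le> (\<integral>\<^sup>+x\<in>cube_shell b j. ennreal (power_weight n x) \<partial>(lborel :: 'a measure))"
      unfolding c_def using b n by (intro nn_integral_power_weight_cube_shell_ge) auto
  qed simp
  also have "\<dots> = (\<integral>\<^sup>+x. (\<Sum>j\<in>{n..<2 * n}. (\<gamma> * ennreal (power_weight n x)) * indicator (cube_shell b j) x) \<partial>(lborel :: 'a measure))"
    by (simp add: nn_integral_sum nn_integral_cmult sum_distrib_left mult.assoc)
  also have "\<dots> \<le> (\<integral>\<^sup>+x. F x * ennreal (power_weight n x) \<partial>lborel)"
  proof (intro nn_integral_mono)
    fix x
    show "(\<Sum>j\<in>{n..<2 * n}. (\<gamma> * ennreal (power_weight n x)) * indicator (cube_shell b j) x)
        \<le> F x * ennreal (power_weight n x)"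
    proof (cases "\<exists>j\<in>{n..<2 * n}. x \<in> cube_shell b j")
      case True
      then obtain j where "j \<in> {n..<2 * n}" "x \<in> cube_shell b j" by blast
      then show ?thesis
        using sum_indicator_disjoint_family[OF disj, of x j "\<lambda>_. \<gamma> * ennreal (power_weight n x)"] F
        by (simp add: mult_right_mono)
    qed (auto simp: indicator_def)
  qed
  finally show ?thesis by (simp add: c_def)
qed

lemma nn_integral_power_weight_outer_shell_le:
  assumes b: "1 < b" and n: "1 \<le> n"
  shows "(\<integral>\<^sup>+x\<in>cube_shell b 0. ennreal (power_weight n x) \<partial>(lborel :: 'a::euclidean_space measure))
    \<le> ennreal ((2 * b) ^ DIM('a))"
proof -
  have "(\<integral>\<^sup>+x\<in>cube_shell b 0. ennreal (power_weight n x) \<partial>(lborel :: 'a measure))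
      \<le> (\<integral>\<^sup>+x. ennreal (b ^ DIM('a)) * indicator (centered_cube 1) x \<partial>(lborel :: 'a measure))"
  proof (intro nn_integral_mono)
    fix x :: 'a
    show "ennreal (power_weight n x) * indicator (cube_shell b 0) x
        \<le> ennreal (b ^ DIM('a)) * indicator (centered_cube 1) x"
    proof (cases "x \<in> cube_shell b 0")
      case True
      then have "x \<in> centered_cube 1" "1 / b \<le> infnorm x"
        by (auto simp: cube_shell_def mem_centered_cube)
      then have "power_weight n x \<le> (1 / b) powr (1 / real n - DIM('a))"
        using b n by (intro power_weight_le) auto
      also have "\<dots> = 1 / b powr (1 / real n - DIM('a))"
        using b by (simp add: powr_divide)
      also have "\<dots> = b powr (- (1 / real n - DIM('a)))"
        by (rule powr_minus_divide[symmetric])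
      also have "\<dots> \<le> b powr DIM('a)"
        using b by (intro powr_mono) auto
      also have "\<dots> = b ^ DIM('a)"
        using b by (simp add: powr_realpow)
      finally show ?thesis
        using True \<open>x \<in> centered_cube 1\<close> by (simp add: ennreal_leI)
    qed simp
  qed
  also have "\<dots> = ennreal (b ^ DIM('a)) * emeasure lborel (centered_cube 1 :: 'a set)"
    by (rule nn_integral_cmult_indicator) simp
  also have "\<dots> = ennreal ((2 * b) ^ DIM('a))"
    using b by (simp add: emeasure_centered_cube ennreal_mult'[symmetric] power_mult_distrib mult_ac)
  finally show ?thesis .
qed

section \<open>The \<open>A\<^sub>q\<close> characteristic of the power weights\<close>

lemma set_integral_le_of_nn_integral_le:
  fixes g :: "'a::euclidean_space \<Rightarrow> real"
  assumes [measurable]: "g \<in> borel_measurable borel" "Q \<in> sets borel"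
    and nonneg: "\<And>x. 0 \<le> g x"
    and bound: "(\<integral>\<^sup>+x\<in>Q. ennreal (g x) \<partial>lborel) \<le> ennreal B" and "0 \<le> B"
  shows "set_integrable lebesgue Q g" "(\<integral>x\<in>Q. g x \<partial>lebesgue) \<le> B"
proof -
  have meas: "(\<lambda>x. indicator Q x *\<^sub>R g x) \<in> borel_measurable (lebesgue :: 'a measure)"
    by (rule measurable_completion) simp
  have eq: "(\<integral>\<^sup>+x. ennreal (indicator Q x *\<^sub>R g x) \<partial>lebesgue) = (\<integral>\<^sup>+x\<in>Q. ennreal (g x) \<partial>lborel)"
    unfolding nn_integral_completion by (intro nn_integral_cong) (simp split: split_indicator)
  have "(\<integral>\<^sup>+x. ennreal (indicator Q x *\<^sub>R g x) \<partial>lebesgue) < \<infinity>"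
    unfolding eq using bound by (simp add: le_less_trans)
  then show "set_integrable lebesgue Q g"
    unfolding set_integrable_def using nonneg
    by (intro integrableI_nonneg[OF meas]) (auto simp: indicator_def)
  have "(\<integral>x\<in>Q. g x \<partial>lebesgue) = enn2real (\<integral>\<^sup>+x\<in>Q. ennreal (g x) \<partial>lborel)"
    unfolding set_lebesgue_integral_def eq[symmetric] using nonneg
    by (intro integral_eq_nn_integral[OF meas]) (auto simp: indicator_def)
  also have "\<dots> \<le> B"
    using bound \<open>0 \<le> B\<close> by (metis enn2real_ennreal enn2real_mono ennreal_neq_top top.not_eq_extremum)
  finally show "(\<integral>x\<in>Q. g x \<partial>lebesgue) \<le> B" .
qed

lemma avg_nonneg: "(\<And>x. 0 \<le> g x) \<Longrightarrow> 0 \<le> avg Q g"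
  unfolding avg_def set_lebesgue_integral_def
  by (auto intro!: divide_nonneg_nonneg integral_nonneg_AE simp: indicator_def)

lemma Aq_quantity_nonneg: "(\<And>x. 0 \<le> w x) \<Longrightarrow> 0 \<le> Aq_quantity q w Q"
  by (simp add: Aq_quantity_def avg_nonneg)

lemma Aq_quantity_le_of_bounds:
  fixes w :: "'a::euclidean_space \<Rightarrow> real"
  assumes q: "1 < q" and [measurable]: "Q \<in> sets borel"
    and \<mu>: "emeasure lborel Q = ennreal \<mu>" "0 < \<mu>"
    and [measurable]: "w \<in> borel_measurable borel" and w_pos: "\<And>x. 0 < w x"
    and upper: "(\<integral>\<^sup>+x\<in>Q. ennreal (w x) \<partial>lborel) \<le> ennreal (X * \<mu>)" "0 \<le> X"
    and lower: "AE x in lborel. x \<in> Q \<longrightarrow> Y \<le> w x" "0 < Y"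
  shows "set_integrable lebesgue Q w \<and> set_integrable lebesgue Q (\<lambda>x. w x powr (-1 / (q - 1)))
    \<and> Aq_quantity q w Q \<le> X / Y"
proof -
  define \<kappa> where "\<kappa> = -1 / (q - 1)"
  have "\<kappa> < 0" using q by (simp add: \<kappa>_def)
  have measure_Q: "measure lebesgue Q = \<mu>"
    using \<mu> by (simp add: measure_completion measure_def)
  have w_int: "set_integrable lebesgue Q w" and w_le: "(\<integral>x\<in>Q. w x \<partial>lebesgue) \<le> X * \<mu>"
    using set_integral_le_of_nn_integral_le[of w Q "X * \<mu>"] upper \<mu> w_pos by (auto simp: less_imp_le)
  have "(\<integral>\<^sup>+x\<in>Q. ennreal (w x powr \<kappa>) \<partial>lborel) \<le> (\<integral>\<^sup>+x. ennreal (Y powr \<kappa>) * indicator Q x \<partial>lborel)"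
    using lower w_pos \<open>\<kappa> < 0\<close>
    by (intro nn_integral_mono_AE) (auto simp: ennreal_leI powr_mono2' split: split_indicator)
  also have "\<dots> = ennreal (Y powr \<kappa> * \<mu>)"
    using \<mu> by (simp add: nn_integral_cmult_indicator ennreal_mult')
  finally have v_int: "set_integrable lebesgue Q (\<lambda>x. w x powr \<kappa>)"
    and v_le: "(\<integral>x\<in>Q. w x powr \<kappa> \<partial>lebesgue) \<le> Y powr \<kappa> * \<mu>"
    using set_integral_le_of_nn_integral_le[of "\<lambda>x. w x powr \<kappa>" Q "Y powr \<kappa> * \<mu>"] \<mu> by auto
  have avg_w: "0 \<le> avg Q w" "avg Q w \<le> X"
    using w_le \<mu> w_pos by (auto simp: avg_nonneg less_imp_le, simp add: avg_def measure_Q divide_le_eq)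
  have "0 \<le> avg Q (\<lambda>x. w x powr \<kappa>)" "avg Q (\<lambda>x. w x powr \<kappa>) \<le> Y powr \<kappa>"
    using v_le \<mu> by (simp add: avg_nonneg, simp add: avg_def measure_Q divide_le_eq)
  then have "avg Q (\<lambda>x. w x powr \<kappa>) powr (q - 1) \<le> (Y powr \<kappa>) powr (q - 1)"
    using q by (intro powr_mono2) auto
  also have "\<dots> = 1 / Y"
  proof -
    have "\<kappa> * (q - 1) = -1" using q by (simp add: \<kappa>_def)
    then show ?thesis using \<open>0 < Y\<close> by (simp add: powr_powr powr_minus_divide)
  qed
  finally have "Aq_quantity q w Q \<le> X * (1 / Y)"
    unfolding Aq_quantity_def \<kappa>_def[symmetric] using avg_w by (intro mult_mono) auto
  with w_int v_int show ?thesis by (simp add: \<kappa>_def)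
qed

lemma Aq_quantity_power_weight_near_origin:
  fixes Q :: "'a::euclidean_space set"
  assumes n: "1 \<le> n" and q: "1 < q" and [measurable]: "Q \<in> sets borel"
    and l: "0 < l" "emeasure lborel Q = ennreal (l ^ DIM('a))" and sub: "Q \<subseteq> centered_cube (4 * l)"
  shows "set_integrable lebesgue Q (power_weight n)
    \<and> set_integrable lebesgue Q (\<lambda>x. power_weight n x powr (-1 / (q - 1)))
    \<and> Aq_quantity q (power_weight n) Q \<le> 2 * 16 ^ DIM('a) * real n"
proof -
  define X where "X = 2 * real n * 4 ^ DIM('a) * (4 * l) powr (1 / real n) / l ^ DIM('a)"
  define Y where "Y = (4 * l) powr (1 / real n - DIM('a))"
  have "(\<integral>\<^sup>+x\<in>Q. ennreal (power_weight n x) \<partial>lborel)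
      \<le> (\<integral>\<^sup>+x\<in>centered_cube (4 * l). ennreal (power_weight n x) \<partial>(lborel :: 'a measure))"
    using sub by (intro nn_integral_mono) (auto split: split_indicator)
  also have "\<dots> \<le> ennreal (X * l ^ DIM('a))"
    using nn_integral_power_weight_centered_cube_le[of "4 * l" n] n l by (simp add: X_def)
  finally have upper: "(\<integral>\<^sup>+x\<in>Q. ennreal (power_weight n x) \<partial>lborel) \<le> ennreal (X * l ^ DIM('a))" .
  have "AE x in lborel. x \<noteq> (0 :: 'a)" by (rule AE_lborel_singleton)
  then have lower: "AE x in lborel. x \<in> Q \<longrightarrow> Y \<le> power_weight n x"
    by eventually_elim (use sub n in \<open>metis Y_def mem_centered_cube power_weight_ge subsetD\<close>)
  have "X / Y = 2 * real n * 4 ^ DIM('a) * ((4 * l) powr (1 / real n) / (4 * l) powr (1 / real n - DIM('a))) / l ^ DIM('a)"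
    by (simp add: X_def Y_def)
  also have "(4 * l) powr (1 / real n) / (4 * l) powr (1 / real n - DIM('a)) = 4 ^ DIM('a) * l ^ DIM('a)"
  proof -
    have "(4 * l) powr (1 / real n - DIM('a)) = (4 * l) powr (1 / real n) / (4 * l) ^ DIM('a)"
      using l by (simp add: powr_diff powr_realpow)
    then show ?thesis using l by (simp add: power_mult_distrib)
  qed
  also have "2 * real n * 4 ^ DIM('a) * (4 ^ DIM('a) * l ^ DIM('a)) / l ^ DIM('a) = 2 * 16 ^ DIM('a) * real n"
  proof -
    have "(16::real) ^ DIM('a) = 4 ^ DIM('a) * 4 ^ DIM('a)"
      by (simp flip: power_mult_distrib)
    then show ?thesis using l by simp
  qed
  finally have "X / Y = 2 * 16 ^ DIM('a) * real n" .
  with Aq_quantity_le_of_bounds[OF q \<open>Q \<in> sets borel\<close> l(2) _ power_weight_borel power_weight_pos upper _ lower]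
  show ?thesis using l by (simp add: X_def Y_def)
qed

lemma Aq_quantity_power_weight_away_from_origin:
  fixes Q :: "'a::euclidean_space set"
  assumes n: "1 \<le> n" and q: "1 < q" and [measurable]: "Q \<in> sets borel"
    and l: "0 < l" "emeasure lborel Q = ennreal (l ^ DIM('a))"
    and m: "3 * l < m" and near_m: "\<And>z. z \<in> Q \<Longrightarrow> \<bar>infnorm z - m\<bar> \<le> l"
  shows "set_integrable lebesgue Q (power_weight n)
    \<and> set_integrable lebesgue Q (\<lambda>x. power_weight n x powr (-1 / (q - 1)))
    \<and> Aq_quantity q (power_weight n) Q \<le> 2 ^ DIM('a)"
proof -
  define e where "e = 1 / real n - DIM('a)"
  have "e \<le> 0" using power_weight_exponent_nonpos[OF n] by (simp add: e_def)
  have "0 < m - l" using m l by linarith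
  have bounds: "m - l \<le> infnorm z" "infnorm z \<le> m + l" if "z \<in> Q" for z
    using near_m[OF that] by linarith+
  have upper: "(\<integral>\<^sup>+x\<in>Q. ennreal (power_weight n x) \<partial>lborel) \<le> ennreal ((m - l) powr e * l ^ DIM('a))"
  proof -
    have "(\<integral>\<^sup>+x\<in>Q. ennreal (power_weight n x) \<partial>lborel) \<le> (\<integral>\<^sup>+x. ennreal ((m - l) powr e) * indicator Q x \<partial>lborel)"
      using bounds n \<open>0 < m - l\<close> unfolding e_def
      by (intro nn_integral_mono) (auto intro!: ennreal_leI power_weight_le split: split_indicator)
    also have "\<dots> = ennreal ((m - l) powr e * l ^ DIM('a))"
      using l by (simp add: nn_integral_cmult_indicator ennreal_mult')
    finally show ?thesis .
  qed
  have lower: "AE x in lborel. x \<in> Q \<longrightarrow> (m + l) powr e \<le> power_weight n x"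
  proof (intro AE_I2 impI)
    fix x assume "x \<in> Q"
    then have "0 < infnorm x" "infnorm x \<le> m + l" using bounds \<open>0 < m - l\<close> by force+
    then show "(m + l) powr e \<le> power_weight n x"
      using n unfolding e_def by (intro power_weight_ge) (auto simp: infnorm_pos_lt)
  qed
  have "(m - l) powr e / (m + l) powr e = ((m - l) / (m + l)) powr e"
    using \<open>0 < m - l\<close> l by (simp add: powr_divide)
  also have "\<dots> \<le> (1 / 2) powr e"
    using \<open>0 < m - l\<close> \<open>e \<le> 0\<close> m l by (intro powr_mono2') (auto simp: field_simps)
  also have "\<dots> = 2 powr (- e)"
    by (simp add: powr_divide powr_minus_divide)
  also have "\<dots> \<le> 2 powr DIM('a)"
    using n by (intro powr_mono) (auto simp: e_def)
  finally have "(m - l) powr e / (m + l) powr e \<le> 2 ^ DIM('a)"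
    by (simp add: powr_realpow)
  with Aq_quantity_le_of_bounds[OF q \<open>Q \<in> sets borel\<close> l(2) _ power_weight_borel power_weight_pos upper _ lower]
  show ?thesis using l \<open>0 < m - l\<close> by simp
qed

lemma Aq_quantity_power_weight_le:
  fixes Q :: "'a::euclidean_space set"
  assumes n: "1 \<le> n" and q: "1 < q" and Q: "Q \<in> cubes"
  shows "set_integrable lebesgue Q (power_weight n)
    \<and> set_integrable lebesgue Q (\<lambda>x. power_weight n x powr (-1 / (q - 1)))
    \<and> Aq_quantity q (power_weight n) Q \<le> 2 * 16 ^ DIM('a) * real n"
proof -
  obtain a l where Q_eq: "Q = cbox a (a + l *\<^sub>R One)" and l: "0 < l" "emeasure lborel Q = ennreal (l ^ DIM('a))"
    and near: "\<And>z. z \<in> Q \<Longrightarrow> \<bar>infnorm z - infnorm a\<bar> \<le> l"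
    using cubesE[OF Q] by metis
  have [measurable]: "Q \<in> sets borel" by (simp add: Q_eq)
  show ?thesis
  proof (cases "infnorm a \<le> 3 * l")
    case True
    then have "Q \<subseteq> centered_cube (4 * l)"
      using near by (force simp: mem_centered_cube abs_le_iff)
    then show ?thesis using Aq_quantity_power_weight_near_origin[OF n q _ l] by simp
  next
    case False
    have "(2::real) ^ DIM('a) \<le> 16 ^ DIM('a)" by (intro power_mono) auto
    also have "\<dots> \<le> 2 * 16 ^ DIM('a) * real n" using n by simp
    finally show ?thesis
      using Aq_quantity_power_weight_away_from_origin[OF n q _ l _ near] False by force
  qed
qed

lemma power_weight_locally_integrable:
  fixes K :: "'a::euclidean_space set"
  assumes n: "1 \<le> n" and K: "compact K"
  shows "set_integrable lebesgue K (power_weight n)"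
proof -
  obtain R where "0 < R" "K \<subseteq> centered_cube R"
    using compact_imp_bounded[OF K] unfolding bounded_iff
    by (metis gt_ex infnorm_le_norm mem_centered_cube order.trans subsetI less_le_not_le
        max.strict_coboundedI2 max.cobounded1)
  have [measurable]: "K \<in> sets borel" using K by (simp add: borel_closed compact_imp_closed)
  have "(\<integral>\<^sup>+x\<in>K. ennreal (power_weight n x) \<partial>lborel)
      \<le> (\<integral>\<^sup>+x\<in>centered_cube R. ennreal (power_weight n x) \<partial>(lborel :: 'a measure))"
    using \<open>K \<subseteq> centered_cube R\<close> by (intro nn_integral_mono) (auto split: split_indicator)
  also have "\<dots> \<le> ennreal (2 * real n * 4 ^ DIM('a) * R powr (1 / real n))"
    using \<open>0 < R\<close> n by (rule nn_integral_power_weight_centered_cube_le)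
  finally show ?thesis
    using power_weight_pos[THEN less_imp_le] by (intro set_integral_le_of_nn_integral_le) auto
qed

lemma power_weight_in_Aq:
  assumes "1 \<le> n" "1 < q"
  shows "in_Aq q (power_weight n :: 'a::euclidean_space \<Rightarrow> real)"
proof -
  have "\<forall>Q\<in>cubes. set_integrable lebesgue Q (power_weight n :: 'a \<Rightarrow> real)
      \<and> set_integrable lebesgue Q (\<lambda>x. power_weight n x powr (-1 / (q - 1)))"
    using Aq_quantity_power_weight_le[OF assms] by blast
  moreover have "bdd_above (Aq_quantity q (power_weight n :: 'a \<Rightarrow> real) ` cubes)"
    using Aq_quantity_power_weight_le[OF assms] by (intro bdd_aboveI2) blast
  ultimately show ?thesis
    unfolding in_Aq_def weight_def
    using assms power_weight_pos power_weight_locally_integrable by (auto intro: measurable_completion)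
qed

lemma Aq_char_nonneg:
  assumes "in_Aq q (w :: 'a::euclidean_space \<Rightarrow> real)"
  shows "0 \<le> Aq_char q w"
proof -
  have "0 \<le> Aq_quantity q w (centered_cube 1)"
    using assms by (intro Aq_quantity_nonneg) (auto simp: in_Aq_def weight_def less_imp_le)
  then show ?thesis
    unfolding Aq_char_def using assms centered_cube_in_cubes[of 1, where 'a='a]
    by (intro cSUP_upper2) (auto simp: in_Aq_def)
qed

lemma Aq_char_power_weight_le:
  assumes "1 \<le> n" "1 < q"
  shows "Aq_char q (power_weight n :: 'a::euclidean_space \<Rightarrow> real) \<le> 2 * 16 ^ DIM('a) * real n"
  unfolding Aq_char_def using assms Aq_quantity_power_weight_le centered_cube_in_cubes[of 1, where 'a='a]
  by (intro cSUP_least) auto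

section \<open>Sparse families, the sparse operator and weighted norms\<close>

lemma epowr_ennreal: "0 \<le> x \<Longrightarrow> epowr (ennreal x) a = ennreal (x powr a)"
  by (simp add: epowr_def)

lemma epowr_mono:
  assumes "0 \<le> a" "x \<le> y"
  shows "epowr x a \<le> epowr y a"
proof (cases "y = top")
  case False
  with assms(2) have "x \<noteq> top" by (auto simp: top_unique)
  have "enn2real x \<le> enn2real y"
    using assms(2) False by (simp add: enn2real_mono top.not_eq_extremum)
  with False \<open>x \<noteq> top\<close> assms(1) show ?thesis
    by (simp add: epowr_def powr_mono2 ennreal_leI)
qed (simp add: epowr_def)

lemma Pr_abs_indicator_eq_1:
  fixes Q A :: "'a::euclidean_space set"
  assumes r: "0 < r" "r < 1" and Q: "0 < measure lebesgue Q"
    and A: "r * measure lebesgue Q < measure lebesgue (Q \<inter> A)"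
  shows "Pr r Q (\<lambda>y. \<bar>indicator A y :: real\<bar>) = 1"
proof -
  have "measure lebesgue {x\<in>Q. \<bar>indicator A x :: real\<bar> > s} =
      (if s < 0 then measure lebesgue Q else if s < 1 then measure lebesgue (Q \<inter> A) else 0)" for s
    by (auto simp: indicator_def intro!: arg_cong[where f = "measure lebesgue"])
  then have "{s. measure lebesgue {x\<in>Q. \<bar>indicator A x :: real\<bar> > s} \<le> r * measure lebesgue Q} = {1..}"
    using r Q A by (auto simp: not_less mult_le_cancel_right1)
  then show ?thesis by (simp add: Pr_def)
qed

lemma Pr_abs_indicator_superset_eq_1:
  fixes Q A :: "'a::euclidean_space set"
  assumes "0 < r" "r < 1" "0 < measure lebesgue Q" "Q \<subseteq> A"
  shows "Pr r Q (\<lambda>y. \<bar>indicator A y :: real\<bar>) = 1"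
  using assms by (intro Pr_abs_indicator_eq_1) (simp_all add: Int_absorb2)

lemma Pr_abs_indicator_cube_shell_eq_1:
  assumes r: "0 < r" and b: "1 < b" "1 / b < 1 - r"
  shows "Pr r (centered_cube (1 / b ^ j) :: 'a::euclidean_space set) (\<lambda>y. \<bar>indicator (cube_shell b j) y :: real\<bar>) = 1"
proof (rule Pr_abs_indicator_eq_1)
  have "0 < 1 / b" using b by simp
  then show "0 < r" "r < 1" using r b by linarith+
  have cube: "measure lebesgue (centered_cube (1 / b ^ j) :: 'a set) = (2 * (1 / b ^ j)) ^ DIM('a)"
    using b by (intro measure_centered_cube) simp
  then show "0 < measure lebesgue (centered_cube (1 / b ^ j) :: 'a set)"
    using b by simp
  have "r * (2 / b ^ j) ^ DIM('a) < (2 / b ^ j) ^ DIM('a) * (1 - (1 / b) ^ DIM('a))"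
    using b power_DIM_inverse_le[of b, where 'a='a] by (simp add: mult.commute)
  moreover have "cube_shell b j \<subseteq> (centered_cube (1 / b ^ j) :: 'a set)"
    using b by (intro cube_shell_subset) auto
  ultimately show "r * measure lebesgue (centered_cube (1 / b ^ j) :: 'a set)
      < measure lebesgue (centered_cube (1 / b ^ j) \<inter> cube_shell b j :: 'a set)"
    using b measure_cube_shell[of b j, where 'a='a] by (simp only: cube Int_absorb1) simp
qed

lemma sparse_op_eq_card:
  assumes "finite S" "0 < t" and Pr: "\<And>Q. Q \<in> S \<Longrightarrow> Pr r Q (\<lambda>y. \<bar>f y\<bar>) = 1"
  shows "sparse_op r t S f x = ennreal (real (card {Q\<in>S. x \<in> Q}) powr (1 / t))"
proof -
  have "(\<integral>\<^sup>+Q. ennreal (Pr r Q (\<lambda>y. \<bar>f y\<bar>) powr t * indicator Q x) \<partial>count_space S)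
      = ennreal (\<Sum>Q\<in>S. indicator Q x)"
    using assms by (simp add: nn_integral_count_space_finite)
  also have "(\<Sum>Q\<in>S. indicator Q x) = real (card {Q\<in>S. x \<in> Q})"
    using \<open>finite S\<close> by (simp add: indicator_def Int_def)
  finally show ?thesis by (simp add: sparse_op_def epowr_ennreal)
qed

lemma inj_centered_cube_power:
  assumes "1 < b"
  shows "inj (\<lambda>k::nat. centered_cube (1 / b ^ k) :: 'a::euclidean_space set)"
proof (rule injI)
  fix j k :: nat
  assume "(centered_cube (1 / b ^ j) :: 'a set) = centered_cube (1 / b ^ k)"
  then have "1 / b ^ j = 1 / b ^ k"
    using assms by (intro inj_onD[OF inj_on_centered_cube]) auto
  then show "j = k" using assms by (simp add: power_inject_exp)
qed

lemma card_centered_cubes_containing_ge: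
  fixes x :: "'a::euclidean_space"
  assumes b: "1 < b" and "j < N" "x \<in> cube_shell b j"
  shows "Suc j \<le> card {Q \<in> (\<lambda>k. centered_cube (1 / b ^ k)) ` {..<N}. x \<in> Q}"
proof -
  let ?g = "\<lambda>k. centered_cube (1 / b ^ k) :: 'a set"
  have "inj_on ?g {..j}"
    using inj_centered_cube_power[OF b] by (rule inj_on_subset) simp
  then have "Suc j = card (?g ` {..j})"
    by (simp add: card_image)
  also have "\<dots> \<le> card {Q \<in> ?g ` {..<N}. x \<in> Q}"
    using assms cube_shell_subset[of b _ j] by (intro card_mono) auto
  finally show ?thesis .
qed

lemma sparse_centered_cubes:
  assumes b: "1 < b" and \<eta>: "\<eta> \<le> 1 - 1 / b"
  shows "sparse \<eta> ((\<lambda>k. centered_cube (1 / b ^ k)) ` K :: 'a::euclidean_space set set)"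
proof -
  define g where "g = (\<lambda>k. centered_cube (1 / b ^ k) :: 'a set)"
  define E where "E Q = (cube_shell b (the_inv_into K g Q) :: 'a set)" for Q
  have "inj_on g K"
    using inj_centered_cube_power[OF b] unfolding g_def by (rule inj_on_subset) simp
  then have E: "E (g k) = cube_shell b k" if "k \<in> K" for k
    using that by (simp add: E_def the_inv_into_f_f)
  have "disjoint_family_on E (g ` K)"
    unfolding disjoint_family_on_def
  proof (intro ballI impI)
    fix Q Q' assume "Q \<in> g ` K" "Q' \<in> g ` K" "Q \<noteq> Q'"
    then obtain j k where "j \<in> K" "k \<in> K" "Q = g j" "Q' = g k" "j \<noteq> k" by blast
    then show "E Q \<inter> E Q' = {}"
      using disjoint_family_cube_shell[of b, where 'a='a] b by (simp add: E disjoint_family_on_def)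
  qed
  moreover have "E Q \<subseteq> Q \<and> E Q \<in> sets lebesgue \<and> \<eta> * measure lebesgue Q \<le> measure lebesgue (E Q)"
    if "Q \<in> g ` K" for Q
  proof -
    obtain k where k: "k \<in> K" "Q = g k" using \<open>Q \<in> g ` K\<close> by blast
    have "\<eta> * (2 / b ^ k) ^ DIM('a) \<le> (2 / b ^ k) ^ DIM('a) * (1 - (1 / b) ^ DIM('a))"
      using \<eta> b power_DIM_inverse_le[of b, where 'a='a] by (simp add: mult.commute mult_left_mono)
    moreover have "measure lebesgue (E Q) = (2 / b ^ k) ^ DIM('a) * (1 - (1 / b) ^ DIM('a))"
      using b unfolding k E[OF k(1)] by (intro measure_cube_shell) simp
    moreover have "measure lebesgue Q = (2 / b ^ k) ^ DIM('a)"
      using measure_centered_cube[of "1 / b ^ k", where 'a='a] b unfolding k g_def by simp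
    moreover have "E Q \<subseteq> Q" "E Q \<in> sets lebesgue"
      using b cube_shell_subset[of b k k] unfolding k E[OF k(1)]
      by (auto simp: g_def intro: sets_completionI_sets)
    ultimately show ?thesis by simp
  qed
  moreover have "g ` K \<subseteq> cubes"
    using b by (auto simp: g_def intro: centered_cube_in_cubes)
  ultimately show ?thesis
    unfolding sparse_def g_def[symmetric] by blast
qed

lemma Lpw_norm_abs_indicator:
  fixes A :: "'a::euclidean_space set"
  assumes "0 < p"
  shows "Lpw_norm p w (\<lambda>x. ennreal \<bar>indicator A x\<bar>) = epowr (\<integral>\<^sup>+x\<in>A. ennreal (w x) \<partial>lborel) (1 / p)"
proof -
  have "epowr (ennreal \<bar>indicator A x\<bar>) p * ennreal (w x) = ennreal (w x) * indicator A x" for x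
    using assms by (simp add: epowr_def split: split_indicator)
  then show ?thesis unfolding Lpw_norm_def nn_integral_completion by simp
qed

lemma in_Lpw_indicator:
  fixes A :: "'a::euclidean_space set"
  assumes "0 < p" "A \<in> sets borel" and finite: "(\<integral>\<^sup>+x\<in>A. ennreal (w x) \<partial>lborel) < \<infinity>"
  shows "in_Lpw p w (indicator A)"
proof -
  have "(\<integral>\<^sup>+x. ennreal (\<bar>indicator A x :: real\<bar> powr p * w x) \<partial>lebesgue) = (\<integral>\<^sup>+x\<in>A. ennreal (w x) \<partial>lborel)"
    unfolding nn_integral_completion using assms(1)
    by (intro nn_integral_cong) (simp split: split_indicator)
  with assms show ?thesis
    by (simp add: in_Lpw_def measurable_completion)
qed

lemma Lpw_norm_ge:
  assumes "0 < p" "0 \<le> L" and L: "ennreal L \<le> (\<integral>\<^sup>+x. epowr (F x) p * ennreal (w x) \<partial>lborel)"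
  shows "ennreal (L powr (1 / p)) \<le> Lpw_norm p w (F :: 'a::euclidean_space \<Rightarrow> ennreal)"
proof -
  have "ennreal (L powr (1 / p)) = epowr (ennreal L) (1 / p)"
    using \<open>0 \<le> L\<close> by (simp add: epowr_ennreal)
  also have "\<dots> \<le> Lpw_norm p w F"
    unfolding Lpw_norm_def nn_integral_completion using assms by (intro epowr_mono) auto
  finally show ?thesis .
qed

section \<open>Testing the sparse bound\<close>

lemma exponent_le_of_powr_bound:
  fixes a b c K :: real
  assumes c: "0 < c" and bound: "\<And>n::nat. 1 \<le> n \<Longrightarrow> c * real n powr a \<le> K * real n powr b"
  shows "a \<le> b"
proof (rule ccontr)
  assume "\<not> a \<le> b"
  then have "filterlim (\<lambda>n. real n powr (a - b)) at_top sequentially"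
    by real_asymp
  then have "eventually (\<lambda>n. K / c < real n powr (a - b) \<and> 1 \<le> n) sequentially"
    by (intro eventually_conj) (auto simp: filterlim_at_top_dense eventually_ge_at_top)
  then obtain n :: nat where n: "K / c < real n powr (a - b)" "1 \<le> n"
    unfolding eventually_sequentially by blast
  have "real n powr (a - b) \<le> K / c"
    using bound[OF n(2)] c n(2) by (simp add: powr_diff field_simps)
  with n(1) show False by simp
qed

lemma exists_shell_ratio:
  fixes r \<eta> :: real
  assumes "0 \<le> r" "r < 1" "\<eta> < 1"
  obtains b where "1 < b" "1 / b < 1 - r" "1 / b \<le> 1 - \<eta>"
proof
  define m where "m = max r \<eta>"
  have "0 \<le> m" "m < 1" using assms by (auto simp: m_def)
  then show "1 < 2 / (1 - m)" by simp
  have "1 / (2 / (1 - m)) < 1 - m"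
    using \<open>m < 1\<close> by simp
  then show "1 / (2 / (1 - m)) < 1 - r" "1 / (2 / (1 - m)) \<le> 1 - \<eta>"
    by (auto simp: m_def)
qed

context
  fixes p t q r \<eta> \<alpha> C :: real
  assumes p: "0 < p" and t: "0 < t" and q: "1 < q" and r: "0 < r" "r < 1" and \<eta>: "\<eta> < 1"
    and \<alpha>: "0 \<le> \<alpha>" and C: "0 \<le> C"
    and bound: "\<And>(w :: 'a::euclidean_space \<Rightarrow> real) S f.
      in_Aq q w \<Longrightarrow> sparse \<eta> S \<Longrightarrow> in_Lpw p w f \<Longrightarrow>
      Lpw_norm p w (sparse_op r t S f) \<le> ennreal (C * Aq_char q w powr \<alpha>) * Lpw_norm p w (\<lambda>x. ennreal \<bar>f x\<bar>)"
begin

lemma bound_tested_on_power_weight: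
  fixes A :: "'a set"
  assumes n: "1 \<le> n" and S: "sparse \<eta> S" and [measurable]: "A \<in> sets borel"
    and norm_f: "(\<integral>\<^sup>+x\<in>A. ennreal (power_weight n x) \<partial>lborel) \<le> ennreal B" "0 \<le> B"
    and norm_op: "ennreal L \<le> (\<integral>\<^sup>+x. epowr (sparse_op r t S (indicator A) x) p * ennreal (power_weight n x) \<partial>lborel)"
      "0 \<le> L"
  shows "L powr (1 / p) \<le> C * (2 * 16 ^ DIM('a) * real n) powr \<alpha> * B powr (1 / p)"
proof -
  let ?w = "power_weight n :: 'a \<Rightarrow> real"
  have "in_Lpw p ?w (indicator A)"
    using norm_f by (intro in_Lpw_indicator p) (auto simp: le_less_trans)
  have "ennreal (L powr (1 / p)) \<le> Lpw_norm p ?w (sparse_op r t S (indicator A))"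
    by (rule Lpw_norm_ge[OF p norm_op(2,1)])
  also have "\<dots> \<le> ennreal (C * Aq_char q ?w powr \<alpha>) * Lpw_norm p ?w (\<lambda>x. ennreal \<bar>indicator A x\<bar>)"
    by (rule bound[OF power_weight_in_Aq[OF n q] S \<open>in_Lpw p ?w (indicator A)\<close>])
  also have "ennreal (C * Aq_char q ?w powr \<alpha>) \<le> ennreal (C * (2 * 16 ^ DIM('a) * real n) powr \<alpha>)"
    using Aq_char_nonneg[OF power_weight_in_Aq[OF n q]] Aq_char_power_weight_le[OF n q] C \<alpha>
    by (intro ennreal_leI mult_left_mono powr_mono2) auto
  also have "Lpw_norm p ?w (\<lambda>x. ennreal \<bar>indicator A x\<bar>) \<le> ennreal (B powr (1 / p))"
    unfolding Lpw_norm_abs_indicator[OF p] epowr_ennreal[OF norm_f(2), symmetric]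
    using norm_f p by (intro epowr_mono) auto
  finally have "ennreal (L powr (1 / p))
      \<le> ennreal (C * (2 * 16 ^ DIM('a) * real n) powr \<alpha>) * ennreal (B powr (1 / p))"
    by (simp add: mult_mono)
  then show ?thesis
    using C by (simp add: ennreal_mult'[symmetric] ennreal_le_iff)
qed

lemma bound_tested_on_single_cube:
  assumes b: "1 < b" "1 / b < 1 - r" "1 / b \<le> 1 - \<eta>" and n: "1 \<le> n"
  shows "(real n * (2 ^ DIM('a) * (1 - 1 / b) / b\<^sup>2)) powr (1 / p)
    \<le> C * (2 * 16 ^ DIM('a) * real n) powr \<alpha> * ((2 * b) ^ DIM('a)) powr (1 / p)"
proof -
  define S where "S = (\<lambda>k. centered_cube (1 / b ^ k) :: 'a set) ` {0}"
  have "sparse \<eta> S" unfolding S_def using b by (intro sparse_centered_cubes) auto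
  have "Pr r (centered_cube 1 :: 'a set) (\<lambda>y. \<bar>indicator (cube_shell b 0) y :: real\<bar>) = 1"
    using Pr_abs_indicator_cube_shell_eq_1[of r b 0] r b by simp
  moreover have "{Q\<in>S. x \<in> Q} = {centered_cube 1}" if "x \<in> cube_shell b j" for x :: 'a and j
    using that cube_shell_subset[of b 0 j] b by (auto simp: S_def)
  ultimately have "sparse_op r t S (indicator (cube_shell b 0)) x = 1" if "x \<in> cube_shell b j" for x :: 'a and j
    using that t by (subst sparse_op_eq_card) (auto simp: S_def)
  then have "1 * ennreal (real n * (2 ^ DIM('a) * (1 - 1 / b) / b\<^sup>2))
      \<le> (\<integral>\<^sup>+x. epowr (sparse_op r t S (indicator (cube_shell b 0)) x) p * ennreal (power_weight n x) \<partial>lborel)"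
    by (intro nn_integral_mult_power_weight_ge[OF b(1) n]) (simp add: epowr_def)
  with b show ?thesis
    by (intro bound_tested_on_power_weight[OF n \<open>sparse \<eta> S\<close> _ nn_integral_power_weight_outer_shell_le[OF b(1) n]]) auto
qed

lemma bound_tested_on_nested_cubes:
  assumes b: "1 < b" "1 / b < 1 - r" "1 / b \<le> 1 - \<eta>" and n: "1 \<le> n"
  shows "(real n powr (p / t) * (real n * (2 ^ DIM('a) * (1 - 1 / b) / b\<^sup>2))) powr (1 / p)
    \<le> C * (2 * 16 ^ DIM('a) * real n) powr \<alpha> * (2 * real n * 4 ^ DIM('a)) powr (1 / p)"
proof -
  define S where "S = (\<lambda>k. centered_cube (1 / b ^ k) :: 'a set) ` {..<2 * n}"
  have "sparse \<eta> S" unfolding S_def using b by (intro sparse_centered_cubes) auto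
  have "Pr r Q (\<lambda>y. \<bar>indicator (centered_cube 1) y :: real\<bar>) = 1" if "Q \<in> S" for Q
  proof -
    obtain k where Q: "Q = centered_cube (1 / b ^ k)" using \<open>Q \<in> S\<close> by (auto simp: S_def)
    have "measure lebesgue Q = (2 * (1 / b ^ k)) ^ DIM('a)"
      unfolding Q using b by (intro measure_centered_cube) simp
    moreover have "Q \<subseteq> centered_cube 1"
      unfolding Q using b by (intro centered_cube_mono) simp
    ultimately show ?thesis
      using r b by (intro Pr_abs_indicator_superset_eq_1) simp_all
  qed
  then have "sparse_op r t S (indicator (centered_cube 1)) x = ennreal (real (card {Q\<in>S. x \<in> Q}) powr (1 / t))"
    for x :: 'a
    using t by (intro sparse_op_eq_card) (simp_all add: S_def)
  moreover have "real n \<le> real (card {Q\<in>S. x \<in> Q})" if "j \<in> {n..<2 * n}" "x \<in> cube_shell b j" for j x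
    using card_centered_cubes_containing_ge[of b j "2 * n" x] that b by (simp add: S_def)
  ultimately have op: "ennreal (real n powr (1 / t)) \<le> sparse_op r t S (indicator (centered_cube 1)) x"
    if "j \<in> {n..<2 * n}" "x \<in> cube_shell b j" for j x
    using that t by (simp add: ennreal_leI powr_mono2)
  let ?c = "real n * (2 ^ DIM('a) * (1 - 1 / b) / b\<^sup>2)"
  let ?I = "\<integral>\<^sup>+x. epowr (sparse_op r t S (indicator (centered_cube 1)) x) p * ennreal (power_weight n x) \<partial>lborel"
  have "epowr (ennreal (real n powr (1 / t))) p * ennreal ?c \<le> ?I"
    using op p by (intro nn_integral_mult_power_weight_ge[OF b(1) n] epowr_mono) auto
  then have "ennreal (real n powr (p / t)) * ennreal ?c \<le> ?I"
    using t by (simp add: epowr_ennreal powr_powr)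
  then have norm_op: "ennreal (real n powr (p / t) * ?c) \<le> ?I"
    by (subst ennreal_mult') auto
  have norm_f: "(\<integral>\<^sup>+x\<in>centered_cube 1. ennreal (power_weight n x) \<partial>(lborel :: 'a measure))
      \<le> ennreal (2 * real n * 4 ^ DIM('a))"
    using nn_integral_power_weight_centered_cube_le[of 1 n, where 'a='a] n by simp
  show ?thesis
    by (rule bound_tested_on_power_weight[OF n \<open>sparse \<eta> S\<close> _ norm_f _ norm_op]) (use b in simp_all)
qed

lemma exponent_ge_inverse_p: "1 / p \<le> \<alpha>"
proof -
  obtain b where b: "1 < b" "1 / b < 1 - r" "1 / b \<le> 1 - \<eta>"
    using exists_shell_ratio[of r \<eta>] r \<eta> by auto
  define c where "c = 2 ^ DIM('a) * (1 - 1 / b) / b\<^sup>2"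
  have "0 < c" using b by (simp add: c_def)
  show ?thesis
  proof (rule exponent_le_of_powr_bound)
    show "0 < c powr (1 / p)" using \<open>0 < c\<close> by simp
    fix n :: nat assume n: "1 \<le> n"
    have "(real n * c) powr (1 / p) \<le> C * (2 * 16 ^ DIM('a) * real n) powr \<alpha> * ((2 * b) ^ DIM('a)) powr (1 / p)"
      using bound_tested_on_single_cube[OF b n] by (simp add: c_def)
    then show "c powr (1 / p) * real n powr (1 / p)
        \<le> C * (2 * 16 ^ DIM('a)) powr \<alpha> * ((2 * b) ^ DIM('a)) powr (1 / p) * real n powr \<alpha>"
      using \<open>0 < c\<close> by (simp add: powr_mult mult_ac)
  qed
qed

lemma exponent_ge_inverse_t: "1 / t \<le> \<alpha>"
proof -
  obtain b where b: "1 < b" "1 / b < 1 - r" "1 / b \<le> 1 - \<eta>"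
    using exists_shell_ratio[of r \<eta>] r \<eta> by auto
  define c where "c = 2 ^ DIM('a) * (1 - 1 / b) / b\<^sup>2"
  have "0 < c" using b by (simp add: c_def)
  have "1 / t + 1 / p \<le> \<alpha> + 1 / p"
  proof (rule exponent_le_of_powr_bound)
    show "0 < c powr (1 / p)" using \<open>0 < c\<close> by simp
    fix n :: nat assume n: "1 \<le> n"
    have "(real n powr (p / t) * (real n * c)) powr (1 / p)
        \<le> C * (2 * 16 ^ DIM('a) * real n) powr \<alpha> * (2 * 4 ^ DIM('a) * real n) powr (1 / p)"
      using bound_tested_on_nested_cubes[OF b n] by (simp add: c_def mult_ac)
    then show "c powr (1 / p) * real n powr (1 / t + 1 / p)
        \<le> C * (2 * 16 ^ DIM('a)) powr \<alpha> * (2 * 4 ^ DIM('a)) powr (1 / p) * real n powr (\<alpha> + 1 / p)"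
      using \<open>0 < c\<close> p by (simp add: powr_mult powr_powr powr_add mult_ac)
  qed
  then show ?thesis by simp
qed

end

theorem lemma4p4:
  fixes p t q r \<eta> \<alpha> :: real
  assumes "0 < p" and "0 < t" and "1 < q" and "0 < r" and "r < 1" and "0 < \<eta>" and "\<eta> < 1"
    and "\<alpha> \<ge> 0"
    and "\<exists>C>0. \<forall>(w :: 'a::euclidean_space \<Rightarrow> real) S f.
           in_Aq q w \<longrightarrow> sparse \<eta> S \<longrightarrow> in_Lpw p w f \<longrightarrow>
           Lpw_norm p w (sparse_op r t S f)
             \<le> ennreal (C * Aq_char q w powr \<alpha>) * Lpw_norm p w (\<lambda>x. ennreal \<bar>f x\<bar>)"
  shows "\<alpha> \<ge> max (1 / p) (1 / t)"
proof -
  obtain C where "0 < C" and bound: "\<forall>(w :: 'a::euclidean_space \<Rightarrow> real) S f.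
      in_Aq q w \<longrightarrow> sparse \<eta> S \<longrightarrow> in_Lpw p w f \<longrightarrow>
      Lpw_norm p w (sparse_op r t S f) \<le> ennreal (C * Aq_char q w powr \<alpha>) * Lpw_norm p w (\<lambda>x. ennreal \<bar>f x\<bar>)"
    using assms(9) by blast
  have "1 / p \<le> \<alpha>" "1 / t \<le> \<alpha>"
    using exponent_ge_inverse_p[of p t q r \<eta> \<alpha> C] exponent_ge_inverse_t[of p t q r \<eta> \<alpha> C]
      assms(1-5,7,8) \<open>0 < C\<close> bound by auto
  then show ?thesis by simp
qed

end
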